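(* Let $0<\alpha<1$, $\sigma>0$, $T>0$, $h=\sigma^2\alpha^2$, $\eta=\frac{4\pi^2\alpha}{\sigma^2\alpha^2}=\frac{4\pi^2}{\sigma^2\alpha}$, let $\gamma>0$, and for $x\in[e^{\frac1\alpha(\gamma-T)},1]$ let $a=2\alpha\pi(T+\alpha\log x)$ and $Q(x)=\frac{x^\alpha}{e^{2\pi a/h}-1}$. Then uniformly for $x\in[e^{\frac1\alpha(\gamma-T)},1]$: if $\eta\ge1$ (i.e. $h\le4\pi^2\alpha$), then $$\frac{1}{e^{\eta T}-1}\le Q(x)\le\frac{e^{\gamma}e^{-T}}{e^{\eta\gamma}-1};$$ if $\eta<1$ (i.e. $h>4\pi^2\alpha$), then $$\frac{(1-\eta)^{1-\frac1\eta}e^{-T}}{\eta}\le Q(x)\le\max\left\{\frac{1}{e^{\eta T}-1},\frac{e^\gamma e^{-T}}{e^{\eta\gamma}-1}\right\}.$$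
   Context: In the paper $\gamma=\alpha\log\!\Big(\frac{\frac1\kappa\sqrt{u^*}+1}{\sqrt{u^*}-1}\Big)+\sqrt{u^*}$ with $\kappa=\frac{\alpha}{1-\alpha}$ and $u^*=\frac{1+(1-2\alpha)\sqrt{4\alpha-4\alpha^2+1}}{2(1-\alpha)^2}$, and it is used with $\gamma<T$ so the interval is nonempty. *)

theory Defs
  imports Complex_Main
begin

end

theory Submission
  imports Defs
begin

text \<open>Substituting \<open>t = T + \<alpha> ln x \<in> [\<gamma>, T]\<close> and noting \<open>2 \<pi> a / h = \<eta> t\<close> turns
  \<open>Q x\<close> into \<open>e\<^sup>-\<^sup>T / g(t)\<close> with \<open>g(t) = e\<^sup>-\<^sup>t (e\<^sup>\<eta>\<^sup>t - 1)\<close> (\<open>damped_expm1 \<eta> t\<close> below).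
  For \<open>\<eta> \<ge> 1\<close> the function \<open>g\<close> is increasing, so both bounds are attained at the endpoints.
  For \<open>\<eta> < 1\<close> it increases up to \<open>t\<^sub>0 = -ln (1 - \<eta>) / \<eta>\<close> and decreases afterwards:
  its maximum \<open>g(t\<^sub>0) = \<eta> (1 - \<eta>)\<^bsup>1/\<eta> - 1\<^esup>\<close> gives the lower bound, and its minimum
  over \<open>[\<gamma>, T]\<close> sits at an endpoint.\<close>

definition damped_expm1 :: "real \<Rightarrow> real \<Rightarrow> real" where
  "damped_expm1 \<eta> t = exp (- t) * (exp (\<eta> * t) - 1)"

lemma damped_expm1_pos:
  assumes "0 < \<eta>" and "0 < t"
  shows "0 < damped_expm1 \<eta> t"
  using assms by (simp add: damped_expm1_def)

lemma exp_mult_div_expm1_eq: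
  "exp t * c / (exp (\<eta> * t) - 1) = c / damped_expm1 \<eta> t"
  by (simp add: damped_expm1_def exp_minus field_simps)

lemma inverse_expm1_eq:
  "1 / (exp (\<eta> * T) - 1) = exp (- T) / damped_expm1 \<eta> T"
  using exp_mult_div_expm1_eq[of T "exp (- T)" \<eta>] by (simp flip: exp_add)

lemma powr_div_expm1_eq:
  assumes "0 < x"
  shows "x powr \<alpha> / (exp (\<eta> * (T + \<alpha> * ln x)) - 1) = exp (- T) / damped_expm1 \<eta> (T + \<alpha> * ln x)"
proof -
  have "x powr \<alpha> = exp (T + \<alpha> * ln x) * exp (- T)"
    using assms by (simp add: powr_def flip: exp_add)
  then show ?thesis
    by (simp add: exp_mult_div_expm1_eq)
qed

lemma damped_expm1_mono:
  assumes "1 \<le> \<eta>" and "s \<le> t"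
  shows "damped_expm1 \<eta> s \<le> damped_expm1 \<eta> t"
proof -
  have diff_exp: "damped_expm1 \<eta> u = exp ((\<eta> - 1) * u) - exp (- u)" for u
    by (simp add: damped_expm1_def algebra_simps flip: exp_add)
  have "exp ((\<eta> - 1) * s) \<le> exp ((\<eta> - 1) * t)"
    using assms by (simp add: mult_left_mono)
  moreover have "exp (- t) \<le> exp (- s)"
    using assms by simp
  ultimately show ?thesis
    unfolding diff_exp by linarith
qed

lemma has_real_derivative_damped_expm1:
  "(damped_expm1 \<eta> has_real_derivative exp (- t) * (1 - (1 - \<eta>) * exp (\<eta> * t))) (at t)"
proof -
  have "(damped_expm1 \<eta> has_real_derivative
          - exp (- t) * (exp (\<eta> * t) - 1) + exp (- t) * (exp (\<eta> * t) * \<eta>)) (at t)"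
    unfolding damped_expm1_def by (auto intro!: derivative_eq_intros)
  then show ?thesis
    by (simp add: algebra_simps)
qed

definition damped_expm1_peak :: "real \<Rightarrow> real" where
  "damped_expm1_peak \<eta> = - ln (1 - \<eta>) / \<eta>"

lemma mult_exp_eq_exp_shift_peak:
  assumes "0 < \<eta>" and "\<eta> < 1"
  shows "(1 - \<eta>) * exp (\<eta> * t) = exp (\<eta> * (t - damped_expm1_peak \<eta>))"
proof -
  have "\<eta> * (t - damped_expm1_peak \<eta>) = ln (1 - \<eta>) + \<eta> * t"
    using assms by (simp add: damped_expm1_peak_def field_simps)
  then show ?thesis
    using assms by (simp add: exp_add)
qed

lemma damped_expm1_mono_below_peak:
  assumes "0 < \<eta>" and "\<eta> < 1" and "s \<le> t" and "t \<le> damped_expm1_peak \<eta>"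
  shows "damped_expm1 \<eta> s \<le> damped_expm1 \<eta> t"
proof (rule DERIV_nonneg_imp_nondecreasing[OF \<open>s \<le> t\<close>])
  fix u assume "u \<le> t"
  then have "exp (\<eta> * (u - damped_expm1_peak \<eta>)) \<le> 1"
    using assms by (simp add: mult_nonneg_nonpos)
  then show "\<exists>y. DERIV (damped_expm1 \<eta>) u :> y \<and> 0 \<le> y"
    using has_real_derivative_damped_expm1 by (fastforce simp: mult_exp_eq_exp_shift_peak assms)
qed

lemma damped_expm1_antimono_above_peak:
  assumes "0 < \<eta>" and "\<eta> < 1" and "s \<le> t" and "damped_expm1_peak \<eta> \<le> s"
  shows "damped_expm1 \<eta> t \<le> damped_expm1 \<eta> s"
proof (rule DERIV_nonpos_imp_nonincreasing[OF \<open>s \<le> t\<close>])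
  fix u assume "s \<le> u"
  then have "1 \<le> exp (\<eta> * (u - damped_expm1_peak \<eta>))"
    using assms by simp
  then show "\<exists>y. DERIV (damped_expm1 \<eta>) u :> y \<and> y \<le> 0"
    using has_real_derivative_damped_expm1
    by (fastforce simp: mult_exp_eq_exp_shift_peak assms mult_nonneg_nonpos)
qed

lemma damped_expm1_peak_value:
  assumes "0 < \<eta>" and "\<eta> < 1"
  shows "damped_expm1 \<eta> (damped_expm1_peak \<eta>) = \<eta> * (1 - \<eta>) powr (1 / \<eta> - 1)"
proof -
  have "exp (- damped_expm1_peak \<eta>) = (1 - \<eta>) powr (1 / \<eta>)"
    using assms by (simp add: damped_expm1_peak_def powr_def)
  moreover have "exp (\<eta> * damped_expm1_peak \<eta>) = 1 / (1 - \<eta>)"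
    using assms by (simp add: damped_expm1_peak_def exp_minus inverse_eq_divide)
  moreover have "1 / (1 - \<eta>) - 1 = \<eta> / (1 - \<eta>)"
    using assms by (simp add: field_simps)
  moreover have "(1 - \<eta>) powr (1 / \<eta> - 1) = (1 - \<eta>) powr (1 / \<eta>) / (1 - \<eta>)"
    using assms by (simp add: powr_diff)
  ultimately show ?thesis
    by (simp add: damped_expm1_def)
qed

lemma damped_expm1_le_peak:
  assumes "0 < \<eta>" and "\<eta> < 1"
  shows "damped_expm1 \<eta> t \<le> \<eta> * (1 - \<eta>) powr (1 / \<eta> - 1)"
  using damped_expm1_mono_below_peak[OF assms, of t] damped_expm1_antimono_above_peak[OF assms, of _ t]
  by (cases "t \<le> damped_expm1_peak \<eta>") (auto simp flip: damped_expm1_peak_value[OF assms])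

lemma damped_expm1_min_endpoints_le:
  assumes "0 < \<eta>" and "\<gamma> \<le> t" and "t \<le> T"
  shows "min (damped_expm1 \<eta> T) (damped_expm1 \<eta> \<gamma>) \<le> damped_expm1 \<eta> t"
proof (cases "\<eta> < 1")
  case True
  then show ?thesis
    using damped_expm1_mono_below_peak[OF \<open>0 < \<eta>\<close> True \<open>\<gamma> \<le> t\<close>]
      damped_expm1_antimono_above_peak[OF \<open>0 < \<eta>\<close> True \<open>t \<le> T\<close>]
    by (cases "t \<le> damped_expm1_peak \<eta>") auto
next
  case False
  then show ?thesis
    using damped_expm1_mono[of \<eta> \<gamma> t] assms by simp
qed

lemma divide_min_eq_max_divide:
  fixes a b c :: "'a::linordered_field"
  assumes "0 < a" and "0 < b" and "0 \<le> c"
  shows "c / min a b = max (c / a) (c / b)"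
proof (cases "a \<le> b")
  case True
  then show ?thesis using assms by (simp add: min_absorb1 max_absorb1 divide_left_mono)
next
  case False
  then show ?thesis using assms by (simp add: min_absorb2 max_absorb2 divide_left_mono)
qed

lemma exp_div_damped_expm1_bounds_ge_1:
  assumes "1 \<le> \<eta>" and "0 < \<gamma>" and "\<gamma> \<le> t" and "t \<le> T"
  shows "1 / (exp (\<eta> * T) - 1) \<le> exp (- T) / damped_expm1 \<eta> t
      \<and> exp (- T) / damped_expm1 \<eta> t \<le> exp \<gamma> * exp (- T) / (exp (\<eta> * \<gamma>) - 1)"
proof -
  have pos: "0 < damped_expm1 \<eta> u" if "\<gamma> \<le> u" for u
    using assms that by (intro damped_expm1_pos) auto
  have "exp (- T) / damped_expm1 \<eta> T \<le> exp (- T) / damped_expm1 \<eta> t"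
    using assms pos damped_expm1_mono[OF \<open>1 \<le> \<eta>\<close> \<open>t \<le> T\<close>] by (intro divide_left_mono) auto
  moreover have "exp (- T) / damped_expm1 \<eta> t \<le> exp (- T) / damped_expm1 \<eta> \<gamma>"
    using assms pos damped_expm1_mono[OF \<open>1 \<le> \<eta>\<close> \<open>\<gamma> \<le> t\<close>] by (intro divide_left_mono) auto
  ultimately show ?thesis
    by (simp add: inverse_expm1_eq exp_mult_div_expm1_eq)
qed

lemma exp_div_damped_expm1_bounds_lt_1:
  assumes "0 < \<eta>" and "\<eta> < 1" and "0 < \<gamma>" and "\<gamma> \<le> t" and "t \<le> T"
  shows "(1 - \<eta>) powr (1 - 1 / \<eta>) * exp (- T) / \<eta> \<le> exp (- T) / damped_expm1 \<eta> t
      \<and> exp (- T) / damped_expm1 \<eta> t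
          \<le> max (1 / (exp (\<eta> * T) - 1)) (exp \<gamma> * exp (- T) / (exp (\<eta> * \<gamma>) - 1))"
proof -
  have pos: "0 < damped_expm1 \<eta> u" if "\<gamma> \<le> u" for u
    using assms that by (intro damped_expm1_pos) auto
  have "(1 - \<eta>) powr (1 - 1 / \<eta>) = 1 / (1 - \<eta>) powr (1 / \<eta> - 1)"
    using powr_minus_divide[of "1 - \<eta>" "1 / \<eta> - 1"] by simp
  then have "(1 - \<eta>) powr (1 - 1 / \<eta>) * exp (- T) / \<eta> = exp (- T) / (\<eta> * (1 - \<eta>) powr (1 / \<eta> - 1))"
    by simp
  also have "\<dots> \<le> exp (- T) / damped_expm1 \<eta> t"
    using assms pos damped_expm1_le_peak[OF \<open>0 < \<eta>\<close> \<open>\<eta> < 1\<close>] by (intro divide_left_mono) auto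
  finally have lower: "(1 - \<eta>) powr (1 - 1 / \<eta>) * exp (- T) / \<eta> \<le> exp (- T) / damped_expm1 \<eta> t" .
  have "min (damped_expm1 \<eta> T) (damped_expm1 \<eta> \<gamma>) \<le> damped_expm1 \<eta> t"
    using assms by (intro damped_expm1_min_endpoints_le) auto
  then have "exp (- T) / damped_expm1 \<eta> t \<le> exp (- T) / min (damped_expm1 \<eta> T) (damped_expm1 \<eta> \<gamma>)"
    using assms pos[of T] pos[of \<gamma>] pos[of t] by (intro divide_left_mono) auto
  also have "\<dots> = max (exp (- T) / damped_expm1 \<eta> T) (exp (- T) / damped_expm1 \<eta> \<gamma>)"
    using assms pos[of T] pos[of \<gamma>] by (simp add: divide_min_eq_max_divide)
  finally show ?thesis
    using lower by (simp add: inverse_expm1_eq exp_mult_div_expm1_eq)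
qed

lemma ln_affine_bounds:
  fixes \<alpha> \<gamma> T x :: real
  assumes "0 < \<alpha>" and "x \<in> {exp ((\<gamma> - T) / \<alpha>)..1}"
  shows "0 < x" and "\<gamma> \<le> T + \<alpha> * ln x" and "T + \<alpha> * ln x \<le> T"
proof -
  show "0 < x"
    using assms(2) exp_gt_zero[of "(\<gamma> - T) / \<alpha>"] by (simp del: exp_gt_zero)
  then have "(\<gamma> - T) / \<alpha> \<le> ln x"
    using assms(2) by (metis atLeastAtMost_iff ln_exp ln_le_cancel_iff exp_gt_zero)
  then show "\<gamma> \<le> T + \<alpha> * ln x"
    using assms(1) by (simp add: field_simps)
  show "T + \<alpha> * ln x \<le> T"
    using assms \<open>0 < x\<close> by (simp add: mult_nonneg_nonpos)
qed

theorem lemma4p1: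
  fixes \<alpha> \<sigma> T \<gamma> h \<eta> :: real
    and a Q :: "real \<Rightarrow> real"
  assumes "0 < \<alpha>" and "\<alpha> < 1" and "0 < \<sigma>" and "0 < T"
    and "h = \<sigma>^2 * \<alpha>^2"
    and "\<eta> = 4 * pi^2 * \<alpha> / (\<sigma>^2 * \<alpha>^2)"
    and "0 < \<gamma>"
    and "\<And>x. a x = 2 * \<alpha> * pi * (T + \<alpha> * ln x)"
    and "\<And>x. Q x = x powr \<alpha> / (exp (2 * pi * a x / h) - 1)"
  shows "(1 \<le> \<eta> \<longrightarrow>
            (\<forall>x \<in> {exp ((\<gamma> - T) / \<alpha>)..1}.
               1 / (exp (\<eta> * T) - 1) \<le> Q x \<and>
               Q x \<le> exp \<gamma> * exp (- T) / (exp (\<eta> * \<gamma>) - 1)))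
       \<and> (\<eta> < 1 \<longrightarrow>
            (\<forall>x \<in> {exp ((\<gamma> - T) / \<alpha>)..1}.
               (1 - \<eta>) powr (1 - 1 / \<eta>) * exp (- T) / \<eta> \<le> Q x \<and>
               Q x \<le> max (1 / (exp (\<eta> * T) - 1))
                            (exp \<gamma> * exp (- T) / (exp (\<eta> * \<gamma>) - 1))))"
proof -
  have "0 < \<eta>"
    using assms(1,3,6) by simp
  have Q_form: "\<exists>t. \<gamma> \<le> t \<and> t \<le> T \<and> Q x = exp (- T) / damped_expm1 \<eta> t"
    if x: "x \<in> {exp ((\<gamma> - T) / \<alpha>)..1}" for x
  proof -
    have "2 * pi * a x / h = \<eta> * (T + \<alpha> * ln x)"
      using assms(1,3) by (simp add: assms(5,6,8) field_simps power2_eq_square)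
    then show ?thesis
      using ln_affine_bounds[OF \<open>0 < \<alpha>\<close> x] powr_div_expm1_eq by (auto simp: assms(9))
  qed
  show ?thesis
    using Q_form exp_div_damped_expm1_bounds_ge_1[OF _ \<open>0 < \<gamma>\<close>]
      exp_div_damped_expm1_bounds_lt_1[OF \<open>0 < \<eta>\<close> _ \<open>0 < \<gamma>\<close>]
    by (metis linorder_not_le)
qed

end
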